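(* Let $(x_t)_{t\in\mathbb{Z}}$ be a real-valued stationary time series and fix a weight $\lambda>0$. Assume: (A1) (Existence) $(x_t)$ admits a weak innovations representation, i.e. there exist causal maps $G,H$ (acting on the infinite past) such that $\nu_t=G(x_t,x_{t-1},\dots)$, $\hat x_t=H(\nu_t,\nu_{t-1},\dots)$, the $\nu_t$ are i.i.d. $\mathcal U[0,1]$, and $(\hat x_t)\stackrel{d}{=}(x_t)$ (equality of all finite-dimensional joint distributions); moreover $H$ is continuous. (A2) (Feasibility) There exist parameters $\tilde\theta_m,\tilde\eta_m$ such that the finite-dimensional maps $G_{\tilde\theta_m},H_{\tilde\eta_m}$ converge uniformly to $G,H$ as $m\to\infty$. (A3) (Training) The training sample sizes are infinite, and for every $m,n$ the training algorithm converges almost surely to a global minimizer $(\theta_m^*,\eta_m^* )$ of the loss $L^{(n)}_m$ defined below. Then for every $n\in\mathbb{Z}^+$, the $m$-dimensional WIAE $(G_{\theta_m^*},H_{\eta_m^*})$ trained with $n$-dimensional discriminators converges in distribution of finite block $n$ to $(G,H)$: for all $t$, as $m\to\infty$, $$\boldsymbol\nu^{*(n)}_{t,m}\stackrel{d}{\to}\boldsymbol\nu^{(n)}_t \quad\text{and}\quad \hat{\boldsymbol x}^{*(n)}_{t,m}\stackrel{d}{\to}\boldsymbol x^{(n)}_t,$$ where $\boldsymbol\nu^{(n)}_t=(\nu_t,\dots,\nu_{t-n+1})$ (a vector of $n$ i.i.d. $\mathcal U[0,1]$ variables) and $\boldsymbol x^{(n)}_t=(x_t,\dots,x_{t-n+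1})$.
   Context: Finite-dimensional Weak Innovations AutoEncoder (WIAE): for each input dimension $m$, $G_\theta:\mathbb{R}^m\to\mathbb{R}$ and $H_\eta:\mathbb{R}^m\to\mathbb{R}$ are parameterized (neural-network) functions; they are regarded as functions of the whole past by ignoring all but the $m$ most recent coordinates (this is the sense of uniform convergence in (A2)). Given parameters $(\theta,\eta)$ define $\nu_{t,m}=G_\theta(x_t,\dots,x_{t-m+1})$ and $\hat x_{t,m}=H_\eta(\nu_{t,m},\dots,\nu_{t-m+1,m})$, and the $n$-blocks $\boldsymbol\nu^{(n)}_{t,m}=(\nu_{t,m},\dots,\nu_{t-n+1,m})$, $\hat{\boldsymbol x}^{(n)}_{t,m}=(\hat x_{t,m},\dots,\hat x_{t-n+1,m})$. The training loss with $n$-dimensional discriminators is $$L^{(n)}_m(\theta,\eta)=\max_{\gamma,\omega}\Big(\mathbb{E}[D_\gamma(\boldsymbol u^{(n)})]-\mathbb{E}[D_\gamma(\boldsymbol\nu^{(n)}_{t,m})]+\lambda\big(\mathbb{E}[D_\omega(\boldsymbol x^{(n)}_t)]-\mathbb{E}[D_\omega(\hat{\boldsymbol x}^{(n)}_{t,m})]\big)\Big),$$ where $\boldsymbol u^{(n)}$ is a vector of $n$ i.i.d. $\mathcal U[0,1]$ variables and the discriminators $D_\gamma,D_\omega:\mathbb{R}^n\to\mathbb{R}$ range over 1-Lipschitz functions, so that (by Kantorovich–Rubinstein duality) $L^{(n)}_m$ equals the 1-Wasserstein distance between the laws of $\boldsymbol u^{(n)}$ and $\boldsymbol\nu^{(n)}_{t,m}$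 plus $\lambda$ times the 1-Wasserstein distance between the laws of $\boldsymbol x^{(n)}_t$ and $\hat{\boldsymbol x}^{(n)}_{t,m}$. The starred quantities $\boldsymbol\nu^{*(n)}_{t,m},\hat{\boldsymbol x}^{*(n)}_{t,m}$ are these blocks computed with the optimal parameters $(\theta_m^*,\eta_m^* )$ minimizing $L^{(n)}_m$. *)

theory Defs
  imports "HOL-Probability.Probability"
begin

text \<open>Sequences of past values are encoded as functions nat => real: index i holds
the value at time t - i.  An n-block is such a function padded with zeros beyond n,
so it is a faithful encoding of a vector in R^n.\<close>

definition block :: "nat \<Rightarrow> (int \<Rightarrow> 'a \<Rightarrow> real) \<Rightarrow> int \<Rightarrow> 'a \<Rightarrow> (nat \<Rightarrow> real)" where
  "block n y t \<omega> = (\<lambda>i. if i < n then y (t - int i) \<omega> else 0)"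

definition block_law :: "'a measure \<Rightarrow> nat \<Rightarrow> (int \<Rightarrow> 'a \<Rightarrow> real) \<Rightarrow> int \<Rightarrow> (nat \<Rightarrow> real) measure" where
  "block_law M n y t = distr M (PiM UNIV (\<lambda>_. borel)) (block n y t)"

definition unif_block_law :: "nat \<Rightarrow> (nat \<Rightarrow> real) measure" where
  "unif_block_law n = distr (PiM {..<n} (\<lambda>_. uniform_measure lborel {0..1::real}))
      (PiM UNIV (\<lambda>_. borel)) (\<lambda>v i. if i < n then v i else 0)"

definition past :: "(int \<Rightarrow> 'a \<Rightarrow> real) \<Rightarrow> int \<Rightarrow> 'a \<Rightarrow> (nat \<Rightarrow> real)" where
  "past y t \<omega> = (\<lambda>i. y (t - int i) \<omega>)"

definition apply_causal :: "((nat \<Rightarrow> real) \<Rightarrow> real) \<Rightarrow> (int \<Rightarrow> 'a \<Rightarrow> real) \<Rightarrow> int \<Rightarrow> 'a \<Rightarrow> real" where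
  "apply_causal F y t \<omega> = F (past y t \<omega>)"

definition dist_n :: "nat \<Rightarrow> (nat \<Rightarrow> real) \<Rightarrow> (nat \<Rightarrow> real) \<Rightarrow> real" where
  "dist_n n a b = sqrt (\<Sum>i<n. (a i - b i)^2)"

definition lip1 :: "nat \<Rightarrow> ((nat \<Rightarrow> real) \<Rightarrow> real) \<Rightarrow> bool" where
  "lip1 n D \<longleftrightarrow> (\<forall>a b. \<bar>D a - D b\<bar> \<le> dist_n n a b)"

text \<open>Kantorovich--Rubinstein dual form of the 1-Wasserstein distance (possibly infinite).\<close>
definition W1 :: "nat \<Rightarrow> (nat \<Rightarrow> real) measure \<Rightarrow> (nat \<Rightarrow> real) measure \<Rightarrow> ereal" where
  "W1 n \<mu> \<nu> = (SUP D \<in> {D. lip1 n D \<and> D \<in> borel_measurable (PiM UNIV (\<lambda>_. borel))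
                     \<and> integrable \<mu> D \<and> integrable \<nu> D}.
                 ereal ((\<integral>z. D z \<partial>\<mu>) - (\<integral>z. D z \<partial>\<nu>)))"

text \<open>The WIAE training loss L^(n)_m(theta, eta) (laws of the blocks at time 0;
by stationarity these do not depend on t).\<close>
definition wiae_loss ::
  "'a measure \<Rightarrow> (nat \<Rightarrow> 'p \<Rightarrow> (nat \<Rightarrow> real) \<Rightarrow> real) \<Rightarrow> (nat \<Rightarrow> 'q \<Rightarrow> (nat \<Rightarrow> real) \<Rightarrow> real)
   \<Rightarrow> real \<Rightarrow> (int \<Rightarrow> 'a \<Rightarrow> real) \<Rightarrow> nat \<Rightarrow> nat \<Rightarrow> 'p \<Rightarrow> 'q \<Rightarrow> ereal" where
  "wiae_loss M Gnet Hnet lam x n m \<theta> \<eta> =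
     W1 n (unif_block_law n) (block_law M n (apply_causal (Gnet m \<theta>) x) 0)
     + ereal lam * W1 n (block_law M n x 0)
                       (block_law M n (apply_causal (Hnet m \<eta>) (apply_causal (Gnet m \<theta>) x)) 0)"

definition stationary :: "'a measure \<Rightarrow> (int \<Rightarrow> 'a \<Rightarrow> real) \<Rightarrow> bool" where
  "stationary M x \<longleftrightarrow> (\<forall>J s. finite J \<longrightarrow>
      distr M (PiM J (\<lambda>_. borel)) (\<lambda>\<omega>. \<lambda>j\<in>J. x (j + s) \<omega>)
    = distr M (PiM J (\<lambda>_. borel)) (\<lambda>\<omega>. \<lambda>j\<in>J. x j \<omega>))"

definition fidi_eq :: "'a measure \<Rightarrow> (int \<Rightarrow> 'a \<Rightarrow> real) \<Rightarrow> (int \<Rightarrow> 'a \<Rightarrow> real) \<Rightarrow> bool" where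
  "fidi_eq M x y \<longleftrightarrow> (\<forall>J. finite J \<longrightarrow>
      distr M (PiM J (\<lambda>_. borel)) (\<lambda>\<omega>. \<lambda>j\<in>J. x j \<omega>)
    = distr M (PiM J (\<lambda>_. borel)) (\<lambda>\<omega>. \<lambda>j\<in>J. y j \<omega>))"

text \<open>Convergence in distribution of laws on R^n (encoded as padded sequences):
convergence of integrals of all bounded continuous test functions of the first n coordinates.\<close>
definition weak_conv_n :: "nat \<Rightarrow> (nat \<Rightarrow> (nat \<Rightarrow> real) measure) \<Rightarrow> (nat \<Rightarrow> real) measure \<Rightarrow> bool" where
  "weak_conv_n n \<mu>s \<mu> \<longleftrightarrow> (\<forall>f :: (nat \<Rightarrow> real) \<Rightarrow> real.
      (\<forall>a b. (\<forall>i<n. a i = b i) \<longrightarrow> f a = f b) \<and> continuous_on UNIV f \<and> bounded (range f)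
      \<and> f \<in> borel_measurable (PiM UNIV (\<lambda>_. borel))
      \<longrightarrow> (\<lambda>m. \<integral>z. f z \<partial>(\<mu>s m)) \<longlonglongrightarrow> (\<integral>z. f z \<partial>\<mu>))"

end

theory Submission
  imports Defs
begin

text \<open>By optimality, the loss at the trained parameters is at most the loss at the feasible
parameters of (A2), and the latter tends to zero: the feasible innovations are uniformly close to
the true ones, which lie in the unit cube; H is uniformly continuous on a compact neighbourhood of
that cube in the product topology, so the feasible reconstructions are uniformly close to the
exact reconstruction, which has the law of x; and two a.s. close random blocks have close laws in
the Wasserstein distance. Both summands of the loss are nonnegative, so both Wasserstein
distances tend to zero, and Wasserstein convergence implies weak convergence because a bounded
continuous test function is the limit of its Lipschitz envelopes. Finally the network outputs
depend on finitely many values of the stationary process x, hence are stationary, so their laws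
at time t equal those at time 0, where the loss is evaluated.\<close>

abbreviation seq_borel :: "(nat \<Rightarrow> real) measure" where
  "seq_borel \<equiv> PiM UNIV (\<lambda>_. borel)"

lemma dist_n_eq_L2_set: "dist_n n a b = L2_set (\<lambda>i. \<bar>a i - b i\<bar>) {..<n}"
  by (simp add: dist_n_def L2_set_def)

lemma dist_n_nonneg: "0 \<le> dist_n n a b"
  by (simp add: dist_n_eq_L2_set)

lemma dist_n_self [simp]: "dist_n n a a = 0"
  by (simp add: dist_n_def)

lemma dist_n_commute: "dist_n n a b = dist_n n b a"
  by (simp add: dist_n_def power2_commute)

lemma dist_n_triangle: "dist_n n a b \<le> dist_n n a c + dist_n n c b"
proof -
  have "dist_n n a b \<le> L2_set (\<lambda>i. \<bar>a i - c i\<bar> + \<bar>c i - b i\<bar>) {..<n}"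
    unfolding dist_n_eq_L2_set by (rule L2_set_mono) (use abs_triangle_ineq[of "a _ - c _"] in auto)
  also have "\<dots> \<le> dist_n n a c + dist_n n c b"
    unfolding dist_n_eq_L2_set by (rule L2_set_triangle_ineq)
  finally show ?thesis .
qed

lemma abs_diff_le_dist_n: "i < n \<Longrightarrow> \<bar>a i - b i\<bar> \<le> dist_n n a b"
  unfolding dist_n_eq_L2_set by (rule member_le_L2_set) auto

lemma dist_n_le:
  assumes "\<And>i. i < n \<Longrightarrow> \<bar>a i - b i\<bar> \<le> c"
  shows "dist_n n a b \<le> sqrt n * \<bar>c\<bar>"
proof -
  have "dist_n n a b \<le> L2_set (\<lambda>_. c) {..<n}"
    unfolding dist_n_eq_L2_set by (rule L2_set_mono) (use assms in auto)
  then show ?thesis by (simp add: L2_set_constant)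
qed

lemma continuous_on_dist_n: "continuous_on UNIV (\<lambda>a. dist_n n a b)"
  unfolding dist_n_def by (intro continuous_intros continuous_on_product_coordinates)

text \<open>The product metric on \<^typ>\<open>nat \<Rightarrow> real\<close> weights the k-th coordinate by 2^-k, and these
weights sum to 2.\<close>
lemma dist_fun_le_coordinatewise:
  fixes a b :: "nat \<Rightarrow> real"
  assumes "c \<ge> 0" "\<And>i. \<bar>a i - b i\<bar> \<le> c"
  shows "dist a b \<le> 2 * c"
proof -
  have term_le: "(1/2)^k * min (dist (a (from_nat k)) (b (from_nat k))) 1 \<le> c * (1/2)^k" for k
  proof -
    have "min (dist (a (from_nat k)) (b (from_nat k))) 1 \<le> c"
      using assms(2)[of "from_nat k"] by (simp add: dist_real_def)
    then show ?thesis by (simp add: mult.commute mult_left_mono)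
  qed
  have geom: "summable (\<lambda>k. c * (1/2::real)^k)"
    by (intro summable_mult summable_geometric) simp
  have "dist a b = (\<Sum>k. (1/2)^k * min (dist (a (from_nat k)) (b (from_nat k))) 1)"
    unfolding dist_fun_def by simp
  also have "\<dots> \<le> (\<Sum>k. c * (1/2::real)^k)"
    by (rule suminf_le[OF term_le summable_comparison_test'[OF geom] geom]) (use term_le in auto)
  also have "\<dots> = 2 * c"
    using suminf_geometric[of "1/2::real"] by (simp add: suminf_mult)
  finally show ?thesis .
qed

lemma W1_ge_integral_diff:
  assumes "lip1 n D" "D \<in> borel_measurable seq_borel" "\<And>a. \<bar>D a\<bar> \<le> B"
    and "prob_space \<mu>" "prob_space \<nu>" "sets \<mu> = sets seq_borel" "sets \<nu> = sets seq_borel"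
  shows "ereal ((\<integral>z. D z \<partial>\<mu>) - (\<integral>z. D z \<partial>\<nu>)) \<le> W1 n \<mu> \<nu>"
proof -
  have "integrable \<rho> D" if "prob_space \<rho>" "sets \<rho> = sets seq_borel" for \<rho>
    using that assms(2,3) measurable_cong_sets[of \<rho> seq_borel borel borel]
    by (intro finite_measure.integrable_const_bound[where B=B]) (auto simp: prob_space.finite_measure)
  then show ?thesis
    unfolding W1_def using assms by (intro SUP_upper) auto
qed

lemma W1_nonneg:
  assumes "prob_space \<mu>" "prob_space \<nu>" "sets \<mu> = sets seq_borel" "sets \<nu> = sets seq_borel"
  shows "0 \<le> W1 n \<mu> \<nu>"
  using W1_ge_integral_diff[of n "\<lambda>_. 0" 0, OF _ _ _ assms]
  by (simp add: lip1_def dist_n_nonneg zero_ereal_def)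

lemma abs_integral_diff_le_W1:
  assumes "lip1 n D" "D \<in> borel_measurable seq_borel" "\<And>a. \<bar>D a\<bar> \<le> B"
    and "prob_space \<mu>" "prob_space \<nu>" "sets \<mu> = sets seq_borel" "sets \<nu> = sets seq_borel"
  shows "ereal \<bar>(\<integral>z. D z \<partial>\<mu>) - (\<integral>z. D z \<partial>\<nu>)\<bar> \<le> W1 n \<mu> \<nu>"
proof -
  have "lip1 n (\<lambda>a. - D a)"
    using assms(1) by (simp add: lip1_def abs_minus_commute)
  moreover have "(\<lambda>a. - D a) \<in> borel_measurable seq_borel" "\<And>a. \<bar>- D a\<bar> \<le> B"
    using assms(2,3) by simp_all
  ultimately have "ereal ((\<integral>z. D z \<partial>\<nu>) - (\<integral>z. D z \<partial>\<mu>)) \<le> W1 n \<mu> \<nu>"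
    using W1_ge_integral_diff[of n "\<lambda>a. - D a" B \<mu> \<nu>] assms(4-) by simp
  with W1_ge_integral_diff[OF assms] show ?thesis
    by (simp add: abs_real_def)
qed

lemma W1_distr_le:
  assumes M: "prob_space M" and Y: "Y \<in> measurable M seq_borel" and Z: "Z \<in> measurable M seq_borel"
    and close: "AE \<omega> in M. dist_n n (Y \<omega>) (Z \<omega>) \<le> c"
  shows "W1 n (distr M seq_borel Y) (distr M seq_borel Z) \<le> ereal c"
  unfolding W1_def
proof (rule SUP_least, clarify)
  interpret prob_space M by (rule M)
  fix D assume D: "lip1 n D" "D \<in> borel_measurable seq_borel"
    "integrable (distr M seq_borel Y) D" "integrable (distr M seq_borel Z) D"
  have iY: "integrable M (\<lambda>\<omega>. D (Y \<omega>))" and iZ: "integrable M (\<lambda>\<omega>. D (Z \<omega>))"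
    using D(3,4) integrable_distr_eq[OF Y D(2)] integrable_distr_eq[OF Z D(2)] by simp_all
  have "(\<integral>z. D z \<partial>distr M seq_borel Y) - (\<integral>z. D z \<partial>distr M seq_borel Z)
      = (\<integral>\<omega>. D (Y \<omega>) - D (Z \<omega>) \<partial>M)"
    using D(2) Y Z iY iZ by (simp add: integral_distr)
  also have "\<dots> \<le> (\<integral>\<omega>. c \<partial>M)"
  proof (rule integral_mono_AE)
    show "AE \<omega> in M. D (Y \<omega>) - D (Z \<omega>) \<le> c"
      using close D(1) unfolding lip1_def by (smt (verit) eventually_mono)
  qed (use iY iZ in simp_all)
  finally show "ereal ((\<integral>z. D z \<partial>distr M seq_borel Y) - (\<integral>z. D z \<partial>distr M seq_borel Z)) \<le> ereal c"
    by (simp add: prob_space)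
qed

definition bounded_lipschitz :: "nat \<Rightarrow> ((nat \<Rightarrow> real) \<Rightarrow> real) \<Rightarrow> bool" where
  "bounded_lipschitz n D \<longleftrightarrow> D \<in> borel_measurable seq_borel \<and> (\<exists>B. \<forall>a. \<bar>D a\<bar> \<le> B)
     \<and> (\<exists>L. \<forall>a b. \<bar>D a - D b\<bar> \<le> L * dist_n n a b)"

lemma tendsto_integral_of_W1:
  fixes \<mu> :: "(nat \<Rightarrow> real) measure" and \<mu>s :: "nat \<Rightarrow> (nat \<Rightarrow> real) measure"
  assumes P: "prob_space \<mu>" "\<And>m. prob_space (\<mu>s m)"
      "sets \<mu> = sets seq_borel" "\<And>m. sets (\<mu>s m) = sets seq_borel"
    and W: "\<And>e. e > 0 \<Longrightarrow> eventually (\<lambda>m. W1 n \<mu> (\<mu>s m) \<le> ereal e) sequentially"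
    and "bounded_lipschitz n D"
  shows "(\<lambda>m. \<integral>z. D z \<partial>\<mu>s m) \<longlonglongrightarrow> (\<integral>z. D z \<partial>\<mu>)"
proof -
  obtain B L where D: "D \<in> borel_measurable seq_borel" "\<And>a. \<bar>D a\<bar> \<le> B"
    "\<And>a b. \<bar>D a - D b\<bar> \<le> L * dist_n n a b"
    using \<open>bounded_lipschitz n D\<close> unfolding bounded_lipschitz_def by blast
  define L' where "L' = max L 1"
  have L': "L' > 0" by (simp add: L'_def)
  have "lip1 n (\<lambda>a. D a / L')"
    unfolding lip1_def
  proof (intro allI)
    fix a b
    have "\<bar>D a - D b\<bar> \<le> L' * dist_n n a b"
      using D(3)[of a b] dist_n_nonneg[of n a b]
      by (smt (verit, best) L'_def max.cobounded1 mult_right_mono)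
    then show "\<bar>D a / L' - D b / L'\<bar> \<le> dist_n n a b"
      using L' by (simp add: diff_divide_distrib[symmetric] abs_divide divide_le_eq mult.commute)
  qed
  from abs_integral_diff_le_W1[OF this _ _ P(1,2,3,4), of "B / L'"] D(1,2) L'
  have bound: "ereal (\<bar>(\<integral>z. D z \<partial>\<mu>) - (\<integral>z. D z \<partial>\<mu>s m)\<bar> / L') \<le> W1 n \<mu> (\<mu>s m)" for m
    by (simp add: diff_divide_distrib[symmetric] abs_divide divide_right_mono)
  show ?thesis
  proof (rule tendstoI)
    fix e :: real assume "e > 0"
    with W[of "e / (2 * L')"] L'
    have "eventually (\<lambda>m. W1 n \<mu> (\<mu>s m) \<le> ereal (e / (2 * L'))) sequentially"
      by simp
    then show "eventually (\<lambda>m. dist (\<integral>z. D z \<partial>\<mu>s m) (\<integral>z. D z \<partial>\<mu>) < e) sequentially"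
    proof (rule eventually_mono)
      fix m assume "W1 n \<mu> (\<mu>s m) \<le> ereal (e / (2 * L'))"
      with bound[of m] have "\<bar>(\<integral>z. D z \<partial>\<mu>) - (\<integral>z. D z \<partial>\<mu>s m)\<bar> / L' \<le> e / (2 * L')"
        by (metis ereal_less_eq(3) order_trans)
      with L' \<open>e > 0\<close> show "dist (\<integral>z. D z \<partial>\<mu>s m) (\<integral>z. D z \<partial>\<mu>) < e"
        by (simp add: dist_real_def abs_minus_commute field_simps)
    qed
  qed
qed

lemma bounded_lipschitzI:
  fixes h :: "(nat \<Rightarrow> real) \<Rightarrow> real"
  assumes bounded: "\<And>a. \<bar>h a\<bar> \<le> B" and lip: "\<And>a b. \<bar>h a - h b\<bar> \<le> L * dist_n n a b"
  shows "bounded_lipschitz n h"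
proof -
  have "continuous_on UNIV h"
    unfolding continuous_on_def
  proof (intro ballI)
    fix b :: "nat \<Rightarrow> real"
    have "((\<lambda>a. dist_n n a b) \<longlongrightarrow> dist_n n b b) (at b)"
      using continuous_on_dist_n[of n b, unfolded continuous_on_def, rule_format, OF UNIV_I] .
    from tendsto_mult_left[OF this, of "\<bar>L\<bar>"]
    have lim: "((\<lambda>a. \<bar>L\<bar> * dist_n n a b) \<longlongrightarrow> 0) (at b)" by simp
    have bound: "\<forall>a. norm (h a - h b) \<le> \<bar>L\<bar> * dist_n n a b"
    proof
      fix a
      have "L * dist_n n a b \<le> \<bar>L\<bar> * dist_n n a b" by (intro mult_right_mono dist_n_nonneg) simp
      with lip[of a b] show "norm (h a - h b) \<le> \<bar>L\<bar> * dist_n n a b" unfolding real_norm_def by linarith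
    qed
    have "((\<lambda>a. h a - h b) \<longlongrightarrow> 0) (at b)"
      by (rule Lim_null_comparison[OF always_eventually[OF bound] lim])
    then show "(h \<longlongrightarrow> h b) (at b within UNIV)"
      by (simp add: LIM_zero_iff)
  qed
  then have "h \<in> borel_measurable borel" by (rule borel_measurable_continuous_onI)
  then have "h \<in> borel_measurable seq_borel"
    by (simp add: measurable_cong_sets[OF sets_PiM_equal_borel refl])
  with bounded lip show ?thesis
    unfolding bounded_lipschitz_def by (intro conjI exI allI)
qed

text \<open>Replacing the coordinates of b beyond n by those of a does not change g but makes b close
to a in the product metric.\<close>
lemma continuous_dist_n_of_window:
  fixes g :: "(nat \<Rightarrow> real) \<Rightarrow> real"
  assumes window: "\<And>a b. (\<forall>i<n. a i = b i) \<Longrightarrow> g a = g b" and cont: "continuous_on UNIV g"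
    and "e > 0"
  obtains \<delta> where "\<delta> > 0" "\<And>b. dist_n n a b < \<delta> \<Longrightarrow> \<bar>g b - g a\<bar> < e"
proof -
  obtain d where d: "d > 0" "\<And>y. dist y a < d \<Longrightarrow> dist (g y) (g a) < e"
    using cont \<open>e > 0\<close> unfolding continuous_on_iff by blast
  show ?thesis
  proof
    fix b assume b: "dist_n n a b < d/2"
    define b' where "b' = (\<lambda>i. if i < n then b i else a i)"
    have "\<bar>b' i - a i\<bar> \<le> dist_n n a b" for i
      using abs_diff_le_dist_n[of i n a b] dist_n_nonneg[of n a b]
      by (auto simp: b'_def abs_minus_commute)
    then have "dist b' a \<le> 2 * dist_n n a b"
      by (intro dist_fun_le_coordinatewise dist_n_nonneg)
    moreover have "g b = g b'" using window by (auto simp: b'_def)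
    ultimately show "\<bar>g b - g a\<bar> < e" using b d(2)[of b'] by (simp add: dist_real_def)
  qed (use d in simp)
qed

text \<open>The Pasch--Hausdorff envelope: the largest k-Lipschitz minorant (for \<^const>\<open>dist_n\<close>) of g.\<close>
definition lipschitz_envelope :: "nat \<Rightarrow> ((nat \<Rightarrow> real) \<Rightarrow> real) \<Rightarrow> nat \<Rightarrow> (nat \<Rightarrow> real) \<Rightarrow> real" where
  "lipschitz_envelope n g k a = Inf (range (\<lambda>b. g b + real k * dist_n n a b))"

context
  fixes g :: "(nat \<Rightarrow> real) \<Rightarrow> real" and B :: real
  assumes bounded: "\<And>a. \<bar>g a\<bar> \<le> B"
begin

lemma lipschitz_envelope_ge: "- B \<le> lipschitz_envelope n g k a"
  unfolding lipschitz_envelope_def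
proof (rule cINF_greatest)
  fix b show "- B \<le> g b + real k * dist_n n a b"
    using bounded[of b] dist_n_nonneg[of n a b] by (smt (verit) of_nat_0_le_iff mult_nonneg_nonneg)
qed simp

lemma lipschitz_envelope_le_sum: "lipschitz_envelope n g k a \<le> g b + real k * dist_n n a b"
  unfolding lipschitz_envelope_def
proof (rule cINF_lower)
  show "bdd_below (range (\<lambda>b. g b + real k * dist_n n a b))"
  proof (rule bdd_belowI2)
    fix b show "- B \<le> g b + real k * dist_n n a b"
      using bounded[of b] dist_n_nonneg[of n a b] by (smt (verit) of_nat_0_le_iff mult_nonneg_nonneg)
  qed
qed simp

lemma lipschitz_envelope_le: "lipschitz_envelope n g k a \<le> g a"
  using lipschitz_envelope_le_sum[of n k a a] by simp

lemma abs_lipschitz_envelope_le: "\<bar>lipschitz_envelope n g k a\<bar> \<le> B"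
  using lipschitz_envelope_ge[of n k a] lipschitz_envelope_le[of n k a] bounded[of a] by linarith

lemma lipschitz_envelope_lipschitz:
  "\<bar>lipschitz_envelope n g k a - lipschitz_envelope n g k a'\<bar> \<le> real k * dist_n n a a'"
proof -
  have one_side: "lipschitz_envelope n g k a - real k * dist_n n a a' \<le> lipschitz_envelope n g k a'"
    for a a'
    unfolding lipschitz_envelope_def[of n g k a']
  proof (rule cINF_greatest)
    fix b
    have "real k * dist_n n a b \<le> real k * dist_n n a a' + real k * dist_n n a' b"
      using dist_n_triangle[of n a b a'] by (metis distrib_left mult_left_mono of_nat_0_le_iff)
    then show "lipschitz_envelope n g k a - real k * dist_n n a a' \<le> g b + real k * dist_n n a' b"
      using lipschitz_envelope_le_sum[of n k a b] by linarith
  qed simp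
  show ?thesis
    using one_side[of a a'] one_side[of a' a] by (simp add: dist_n_commute abs_le_iff)
qed

lemma lipschitz_envelope_tendsto:
  assumes window: "\<And>a b. (\<forall>i<n. a i = b i) \<Longrightarrow> g a = g b" and cont: "continuous_on UNIV g"
  shows "(\<lambda>k. lipschitz_envelope n g k a) \<longlonglongrightarrow> g a"
proof (rule LIMSEQ_I)
  fix r :: real assume r: "r > 0"
  then obtain \<delta> where \<delta>: "\<delta> > 0" "\<And>b. dist_n n a b < \<delta> \<Longrightarrow> \<bar>g b - g a\<bar> < r/2"
    using continuous_dist_n_of_window[OF window cont, where e="r/2" and a=a] by auto
  obtain N :: nat where N: "real N \<ge> 2 * B / \<delta>" using real_arch_simple by blast
  have "norm (lipschitz_envelope n g k a - g a) < r" if k: "N \<le> k" for k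
  proof -
    have far: "2 * B \<le> real k * \<delta>"
      using N k \<delta>(1) by (smt (verit, best) of_nat_le_iff pos_divide_le_eq)
    have "g a - r/2 \<le> lipschitz_envelope n g k a"
      unfolding lipschitz_envelope_def
    proof (rule cINF_greatest)
      fix b
      show "g a - r/2 \<le> g b + real k * dist_n n a b"
      proof (cases "dist_n n a b < \<delta>")
        case True then show ?thesis
          using \<delta>(2)[of b] dist_n_nonneg[of n a b] by (smt (verit) mult_nonneg_nonneg of_nat_0_le_iff)
      next
        case False
        then have "real k * \<delta> \<le> real k * dist_n n a b" by (simp add: mult_left_mono)
        then show ?thesis using far bounded[of a] bounded[of b] r by linarith
      qed
    qed simp
    then show ?thesis using lipschitz_envelope_le[of n k a] r by simp
  qed
  then show "\<exists>N. \<forall>k\<ge>N. norm (lipschitz_envelope n g k a - g a) < r" by blast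
qed

end

text \<open>The lower half of the portmanteau theorem: approximate g from below by its Lipschitz
envelopes, which converge pointwise and boundedly, hence in \<open>\<mu>\<close>-mean.\<close>
lemma eventually_integral_gt_of_lipschitz:
  fixes g :: "(nat \<Rightarrow> real) \<Rightarrow> real"
    and \<mu> :: "(nat \<Rightarrow> real) measure" and \<mu>s :: "nat \<Rightarrow> (nat \<Rightarrow> real) measure"
  assumes P: "prob_space \<mu>" "\<And>m. prob_space (\<mu>s m)"
      "sets \<mu> = sets seq_borel" "\<And>m. sets (\<mu>s m) = sets seq_borel"
    and lip: "\<And>D. bounded_lipschitz n D \<Longrightarrow> (\<lambda>m. \<integral>z. D z \<partial>\<mu>s m) \<longlonglongrightarrow> (\<integral>z. D z \<partial>\<mu>)"
    and window: "\<And>a b. (\<forall>i<n. a i = b i) \<Longrightarrow> g a = g b" and cont: "continuous_on UNIV g"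
    and bounded: "\<And>a. \<bar>g a\<bar> \<le> B" and gm: "g \<in> borel_measurable seq_borel" and e: "e > 0"
  shows "eventually (\<lambda>m. (\<integral>z. g z \<partial>\<mu>) - e < (\<integral>z. g z \<partial>\<mu>s m)) sequentially"
proof -
  let ?g = "lipschitz_envelope n g"
  have gk: "bounded_lipschitz n (?g k)" for k
    by (rule bounded_lipschitzI[OF abs_lipschitz_envelope_le lipschitz_envelope_lipschitz]) (rule bounded)+
  then have gkm: "?g k \<in> borel_measurable seq_borel" for k
    by (simp add: bounded_lipschitz_def)
  have integrable: "integrable \<rho> g" "integrable \<rho> (?g k)"
    if "prob_space \<rho>" "sets \<rho> = sets seq_borel" for \<rho> :: "(nat \<Rightarrow> real) measure" and k
    using that gm gkm bounded abs_lipschitz_envelope_le[OF bounded] measurable_cong_sets[OF that(2) refl]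
    by (auto simp: prob_space.finite_measure intro!: finite_measure.integrable_const_bound[where B=B])
  have "(\<lambda>k. \<integral>z. ?g k z \<partial>\<mu>) \<longlonglongrightarrow> (\<integral>z. g z \<partial>\<mu>)"
  proof (rule integral_dominated_convergence[where w = "\<lambda>_. B"])
    show "AE a in \<mu>. (\<lambda>k. ?g k a) \<longlonglongrightarrow> g a"
      using lipschitz_envelope_tendsto[OF bounded window cont] by simp
  qed (use integrable[OF P(1,3)] abs_lipschitz_envelope_le[OF bounded] P(1)
        in \<open>auto simp: prob_space.finite_measure finite_measure.integrable_const\<close>)
  then have "eventually (\<lambda>k. (\<integral>z. g z \<partial>\<mu>) - e/2 < (\<integral>z. ?g k z \<partial>\<mu>)) sequentially"
    using e by (intro order_tendstoD(1)) auto
  then obtain k where k: "(\<integral>z. g z \<partial>\<mu>) - e/2 < (\<integral>z. ?g k z \<partial>\<mu>)"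
    unfolding eventually_sequentially by blast
  have "(\<lambda>m. \<integral>z. ?g k z \<partial>\<mu>s m) \<longlonglongrightarrow> (\<integral>z. ?g k z \<partial>\<mu>)"
    using lip[OF gk] .
  then have "eventually (\<lambda>m. (\<integral>z. ?g k z \<partial>\<mu>) - e/2 < (\<integral>z. ?g k z \<partial>\<mu>s m)) sequentially"
    using e by (intro order_tendstoD(1)) auto
  then show ?thesis
  proof (rule eventually_mono)
    fix m assume "(\<integral>z. ?g k z \<partial>\<mu>) - e/2 < (\<integral>z. ?g k z \<partial>\<mu>s m)"
    moreover have "(\<integral>z. ?g k z \<partial>\<mu>s m) \<le> (\<integral>z. g z \<partial>\<mu>s m)"
      using integrable[OF P(2,4)] lipschitz_envelope_le[OF bounded] by (intro integral_mono) auto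
    ultimately show "(\<integral>z. g z \<partial>\<mu>) - e < (\<integral>z. g z \<partial>\<mu>s m)" using k by linarith
  qed
qed

lemma weak_conv_nI_lipschitz:
  fixes \<mu> :: "(nat \<Rightarrow> real) measure" and \<mu>s :: "nat \<Rightarrow> (nat \<Rightarrow> real) measure"
  assumes P: "prob_space \<mu>" "\<And>m. prob_space (\<mu>s m)"
      "sets \<mu> = sets seq_borel" "\<And>m. sets (\<mu>s m) = sets seq_borel"
    and lip: "\<And>D. bounded_lipschitz n D \<Longrightarrow> (\<lambda>m. \<integral>z. D z \<partial>\<mu>s m) \<longlonglongrightarrow> (\<integral>z. D z \<partial>\<mu>)"
  shows "weak_conv_n n \<mu>s \<mu>"
  unfolding weak_conv_n_def
proof (intro allI impI, elim conjE)
  fix f :: "(nat \<Rightarrow> real) \<Rightarrow> real"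
  assume "\<forall>a b. (\<forall>i<n. a i = b i) \<longrightarrow> f a = f b" and cont: "continuous_on UNIV f"
    and "bounded (range f)" and fm: "f \<in> borel_measurable seq_borel"
  have window: "\<And>a b. (\<forall>i<n. a i = b i) \<Longrightarrow> f a = f b"
    using \<open>\<forall>a b. (\<forall>i<n. a i = b i) \<longrightarrow> f a = f b\<close> by blast
  obtain B where B: "\<And>a. \<bar>f a\<bar> \<le> B"
    using \<open>bounded (range f)\<close> unfolding bounded_iff by (auto simp: real_norm_def)
  show "(\<lambda>m. \<integral>z. f z \<partial>\<mu>s m) \<longlonglongrightarrow> (\<integral>z. f z \<partial>\<mu>)"
  proof (rule order_tendstoI)
    fix y assume "y < (\<integral>z. f z \<partial>\<mu>)"
    then have pos: "(\<integral>z. f z \<partial>\<mu>) - y > 0" by simp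
    have "eventually (\<lambda>m. (\<integral>z. f z \<partial>\<mu>) - ((\<integral>z. f z \<partial>\<mu>) - y) < (\<integral>z. f z \<partial>\<mu>s m)) sequentially"
      using lip window cont B fm pos by (rule eventually_integral_gt_of_lipschitz[OF P])
    then show "eventually (\<lambda>m. y < (\<integral>z. f z \<partial>\<mu>s m)) sequentially"
      by simp
  next
    fix y assume "(\<integral>z. f z \<partial>\<mu>) < y"
    have "eventually (\<lambda>m. (\<integral>z. - f z \<partial>\<mu>) - (y - (\<integral>z. f z \<partial>\<mu>)) < (\<integral>z. - f z \<partial>\<mu>s m))
        sequentially"
    proof -
      note lip
      moreover have "- f a = - f b" if "\<forall>i<n. a i = b i" for a b using window[OF that] by simp
      moreover have "continuous_on UNIV (\<lambda>a. - f a)" using cont by (rule continuous_on_minus)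
      moreover have "\<bar>- f a\<bar> \<le> B" for a using B[of a] by simp
      moreover have "(\<lambda>a. - f a) \<in> borel_measurable seq_borel" using fm by (rule borel_measurable_uminus)
      moreover have "y - (\<integral>z. f z \<partial>\<mu>) > 0" using \<open>(\<integral>z. f z \<partial>\<mu>) < y\<close> by simp
      ultimately show ?thesis
        by (rule eventually_integral_gt_of_lipschitz[OF P])
    qed
    then show "eventually (\<lambda>m. (\<integral>z. f z \<partial>\<mu>s m) < y) sequentially"
      by (rule eventually_mono) (unfold integral_minus, linarith)
  qed
qed

lemma weak_conv_n_of_W1:
  fixes \<mu> :: "(nat \<Rightarrow> real) measure" and \<mu>s :: "nat \<Rightarrow> (nat \<Rightarrow> real) measure"
  assumes P: "prob_space \<mu>" "\<And>m. prob_space (\<mu>s m)"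
      "sets \<mu> = sets seq_borel" "\<And>m. sets (\<mu>s m) = sets seq_borel"
    and W: "\<And>e. e > 0 \<Longrightarrow> eventually (\<lambda>m. W1 n \<mu> (\<mu>s m) \<le> ereal e) sequentially"
  shows "weak_conv_n n \<mu>s \<mu>"
  by (rule weak_conv_nI_lipschitz[OF P tendsto_integral_of_W1[where n=n, OF P W]])

lemma measurable_zero_padded:
  assumes "\<And>i. i < n \<Longrightarrow> F i \<in> borel_measurable N"
  shows "(\<lambda>z i. if i < n then F i z else 0) \<in> measurable N seq_borel"
proof -
  have "(\<lambda>z i. (\<lambda>i z. if i < n then F i z else (0::real)) i z) \<in> measurable N seq_borel"
  proof (rule measurable_PiM_single')
    fix i show "(\<lambda>z. if i < n then F i z else 0) \<in> borel_measurable N"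
      using assms by (cases "i < n") auto
  qed (auto simp: space_PiM)
  then show ?thesis by simp
qed

lemma measurable_past:
  assumes "\<And>t. y t \<in> borel_measurable M"
  shows "past y t \<in> measurable M seq_borel"
  unfolding past_def[abs_def]
  by (rule measurable_PiM_single') (use assms in \<open>auto simp: space_PiM\<close>)

lemma measurable_apply_causal:
  assumes "F \<in> borel_measurable seq_borel" "\<And>t. y t \<in> borel_measurable M"
  shows "apply_causal F y t \<in> borel_measurable M"
  using measurable_comp[OF measurable_past[OF assms(2)] assms(1)]
  by (simp add: apply_causal_def[abs_def] comp_def)

lemma measurable_block:
  assumes "\<And>t. y t \<in> borel_measurable M"
  shows "block n y t \<in> measurable M seq_borel"
  unfolding block_def[abs_def] by (rule measurable_zero_padded) (use assms in auto)

lemma prob_space_block_law: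
  assumes "prob_space M" "\<And>t. y t \<in> borel_measurable M"
  shows "prob_space (block_law M n y t)" "sets (block_law M n y t) = sets seq_borel"
  unfolding block_law_def
  using prob_space.prob_space_distr[OF assms(1) measurable_block[OF assms(2)]] by auto

lemma measurable_restrict_shift:
  assumes "(\<lambda>j. j + c) ` J \<subseteq> J'"
  shows "(\<lambda>z. \<lambda>j\<in>J. z (j + c)) \<in> measurable (PiM J' (\<lambda>_. borel)) (PiM J (\<lambda>_. borel :: real measure))"
  by (rule measurable_restrict) (use assms in \<open>auto intro: measurable_component_singleton\<close>)

text \<open>A block is a measurable function of the finitely many coordinates \<open>t - n, \<dots>, t\<close>.\<close>
lemma block_law_eq_of_fidi_eq:
  assumes "fidi_eq M y x" "\<And>t. y t \<in> borel_measurable M" "\<And>t. x t \<in> borel_measurable M"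
  shows "block_law M n y t = block_law M n x t"
proof -
  let ?J = "{t - int n..t}"
  let ?pad = "\<lambda>z i. if i < n then z (t - int i) else (0::real)"
  have pad: "?pad \<in> measurable (PiM ?J (\<lambda>_. borel)) seq_borel"
    by (rule measurable_zero_padded) (auto intro: measurable_component_singleton)
  have "block_law M n z t = distr (distr M (PiM ?J (\<lambda>_. borel)) (\<lambda>\<omega>. \<lambda>j\<in>?J. z j \<omega>)) seq_borel ?pad"
    if "\<And>t. z t \<in> borel_measurable M" for z
  proof -
    have "(\<lambda>\<omega>. \<lambda>j\<in>?J. z j \<omega>) \<in> measurable M (PiM ?J (\<lambda>_. borel))"
      by (rule measurable_restrict) (use that in auto)
    moreover have "block n z t = ?pad \<circ> (\<lambda>\<omega>. \<lambda>j\<in>?J. z j \<omega>)"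
      by (auto simp: fun_eq_iff block_def)
    ultimately show ?thesis
      unfolding block_law_def by (simp add: distr_distr[OF pad])
  qed
  with assms show ?thesis unfolding fidi_eq_def by simp
qed

lemma stationary_iff_fidi_eq_shift: "stationary M y \<longleftrightarrow> (\<forall>s. fidi_eq M (\<lambda>j. y (j + s)) y)"
  unfolding stationary_def fidi_eq_def by blast

lemma block_law_stationary:
  assumes "stationary M y" "\<And>t. y t \<in> borel_measurable M"
  shows "block_law M n y t = block_law M n y 0"
proof -
  have "block n y t = block n (\<lambda>j. y (j + t)) 0"
    by (simp add: fun_eq_iff block_def algebra_simps)
  then have "block_law M n y t = block_law M n (\<lambda>j. y (j + t)) 0"
    by (simp add: block_law_def)
  also have "\<dots> = block_law M n y 0"
    using assms by (intro block_law_eq_of_fidi_eq) (auto simp: stationary_iff_fidi_eq_shift)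
  finally show ?thesis .
qed

definition sliding_window :: "(int \<Rightarrow> 'a \<Rightarrow> real) \<Rightarrow> (int \<Rightarrow> 'a \<Rightarrow> real) \<Rightarrow> bool" where
  "sliding_window x y \<longleftrightarrow> (\<exists>J \<Psi>. finite J \<and> \<Psi> \<in> borel_measurable (PiM J (\<lambda>_. borel))
     \<and> (\<forall>t \<omega>. y t \<omega> = \<Psi> (\<lambda>j\<in>J. x (j + t) \<omega>)))"

lemma sliding_window_refl: "sliding_window x x"
  unfolding sliding_window_def
  by (intro exI[of _ "{0}"] exI[of _ "\<lambda>z. z 0"] conjI allI) (auto intro: measurable_component_singleton)

lemma sliding_window_apply_causal:
  assumes "sliding_window x y" and F: "F \<in> borel_measurable seq_borel"
    and window: "\<And>a b. (\<forall>i<m. a i = b i) \<Longrightarrow> F a = F b"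
  shows "sliding_window x (apply_causal F y)"
proof -
  obtain J \<Psi> where J: "finite J" and \<Psi>: "\<Psi> \<in> borel_measurable (PiM J (\<lambda>_. borel))"
    and y: "\<And>t \<omega>. y t \<omega> = \<Psi> (\<lambda>j\<in>J. x (j + t) \<omega>)"
    using assms(1) unfolding sliding_window_def by blast
  define J' where "J' = (\<lambda>(j, l). j - int l) ` (J \<times> {..<m})"
  define \<Psi>' where "\<Psi>' = (\<lambda>z. F (\<lambda>l. if l < m then \<Psi> (\<lambda>j\<in>J. z (j + - int l)) else 0))"
  have "\<Psi>' \<in> borel_measurable (PiM J' (\<lambda>_. borel))"
    unfolding \<Psi>'_def
  proof (rule measurable_compose[OF measurable_zero_padded F])
    fix l assume "l < m"
    then have "(\<lambda>j. j + - int l) ` J \<subseteq> J'" by (force simp: J'_def)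
    then show "(\<lambda>z. \<Psi> (\<lambda>j\<in>J. z (j + - int l))) \<in> borel_measurable (PiM J' (\<lambda>_. borel))"
      by (rule measurable_compose[OF measurable_restrict_shift \<Psi>])
  qed
  moreover have "apply_causal F y t \<omega> = \<Psi>' (\<lambda>j\<in>J'. x (j + t) \<omega>)" for t \<omega>
  proof -
    have "apply_causal F y t \<omega> = F (\<lambda>l. if l < m then y (t - int l) \<omega> else 0)"
      unfolding apply_causal_def past_def by (rule window) simp
    also have "\<dots> = \<Psi>' (\<lambda>j\<in>J'. x (j + t) \<omega>)"
      unfolding \<Psi>'_def y
      by (intro arg_cong[where f=F] ext if_cong refl arg_cong[where f=\<Psi>] restrict_ext)
        (force simp: J'_def algebra_simps)
    finally show ?thesis .
  qed
  moreover have "finite J'" using J by (simp add: J'_def)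
  ultimately show ?thesis unfolding sliding_window_def by blast
qed

lemma stationary_sliding_window:
  assumes stat: "stationary M x" and x: "\<And>t. x t \<in> borel_measurable M" and "sliding_window x y"
  shows "stationary M y"
  unfolding stationary_def
proof (intro allI impI)
  fix K :: "int set" and s :: int assume "finite K"
  obtain J \<Psi> where J: "finite J" and \<Psi>: "\<Psi> \<in> borel_measurable (PiM J (\<lambda>_. borel))"
    and y: "\<And>t \<omega>. y t \<omega> = \<Psi> (\<lambda>j\<in>J. x (j + t) \<omega>)"
    using assms(3) unfolding sliding_window_def by blast
  define J' where "J' = (\<lambda>(j, k). j + k) ` (J \<times> K)"
  define \<Phi> where "\<Phi> = (\<lambda>z. \<lambda>k\<in>K. \<Psi> (\<lambda>j\<in>J. z (j + k)))"
  have \<Phi>: "\<Phi> \<in> measurable (PiM J' (\<lambda>_. borel)) (PiM K (\<lambda>_. borel))"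
    unfolding \<Phi>_def
  proof (rule measurable_restrict)
    fix k assume "k \<in> K"
    then have "(\<lambda>j. j + k) ` J \<subseteq> J'" by (force simp: J'_def)
    then show "(\<lambda>z. \<Psi> (\<lambda>j\<in>J. z (j + k))) \<in> borel_measurable (PiM J' (\<lambda>_. borel))"
      by (rule measurable_compose[OF measurable_restrict_shift \<Psi>])
  qed
  have X: "(\<lambda>\<omega>. \<lambda>i\<in>J'. x (i + r) \<omega>) \<in> measurable M (PiM J' (\<lambda>_. borel))" for r
    by (rule measurable_restrict) (use x in auto)
  have Y: "(\<lambda>\<omega>. \<lambda>k\<in>K. y (k + r) \<omega>) = \<Phi> \<circ> (\<lambda>\<omega>. \<lambda>i\<in>J'. x (i + r) \<omega>)" for r
  proof (intro ext)
    fix \<omega> k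
    show "(\<lambda>k\<in>K. y (k + r) \<omega>) k = (\<Phi> \<circ> (\<lambda>\<omega>. \<lambda>i\<in>J'. x (i + r) \<omega>)) \<omega> k"
    proof (cases "k \<in> K")
      case True
      then have "(\<lambda>j\<in>J. x (j + (k + r)) \<omega>) = (\<lambda>j\<in>J. (\<lambda>i\<in>J'. x (i + r) \<omega>) (j + k))"
        by (intro restrict_ext) (force simp: J'_def algebra_simps)
      with True show ?thesis by (simp add: \<Phi>_def y)
    qed (simp add: \<Phi>_def)
  qed
  have X0: "(\<lambda>\<omega>. \<lambda>i\<in>J'. x i \<omega>) \<in> measurable M (PiM J' (\<lambda>_. borel))"
    using X[of 0] by simp
  have Y0: "(\<lambda>\<omega>. \<lambda>k\<in>K. y k \<omega>) = \<Phi> \<circ> (\<lambda>\<omega>. \<lambda>i\<in>J'. x i \<omega>)"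
    using Y[of 0] by simp
  have "finite J'" using J \<open>finite K\<close> by (simp add: J'_def)
  then have shift: "distr M (PiM J' (\<lambda>_. borel)) (\<lambda>\<omega>. \<lambda>i\<in>J'. x (i + s) \<omega>)
      = distr M (PiM J' (\<lambda>_. borel)) (\<lambda>\<omega>. \<lambda>i\<in>J'. x i \<omega>)"
    using stat unfolding stationary_def by blast
  show "distr M (PiM K (\<lambda>_. borel)) (\<lambda>\<omega>. \<lambda>k\<in>K. y (k + s) \<omega>)
      = distr M (PiM K (\<lambda>_. borel)) (\<lambda>\<omega>. \<lambda>k\<in>K. y k \<omega>)"
    unfolding Y[of s] Y0 distr_distr[OF \<Phi> X, symmetric] distr_distr[OF \<Phi> X0, symmetric] shift ..
qed

lemma block_law_iid_uniform:
  assumes P: "prob_space M" and meas: "\<And>t. \<nu> t \<in> borel_measurable M"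
    and indep: "prob_space.indep_vars M (\<lambda>_. borel) \<nu> UNIV"
    and unif: "\<And>t. distr M borel (\<nu> t) = uniform_measure lborel {0..1::real}"
    and "n \<ge> 1"
  shows "block_law M n \<nu> t = unif_block_law n"
proof -
  interpret prob_space M by (rule P)
  let ?U = "uniform_measure lborel {0..1::real}"
  define f where "f = (\<lambda>i::nat. t - int i)"
  define J where "J = f ` {..<n}"
  let ?restr = "\<lambda>\<omega>. \<lambda>j\<in>J. \<nu> j \<omega>" and ?reindex = "\<lambda>\<omega>. \<lambda>i\<in>{..<n}. \<omega> (f i)"
    and ?pad = "\<lambda>v i. if i < n then v i else (0::real)"
  have sets_U: "sets (PiM K (\<lambda>_. ?U)) = sets (PiM K (\<lambda>_. borel))" for K :: "'b set"
    by (rule sets_PiM_cong) auto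
  have restr: "?restr \<in> measurable M (PiM J (\<lambda>_. borel))"
    by (rule measurable_restrict) (use meas in auto)
  have reindex: "?reindex \<in> measurable (PiM J (\<lambda>_. borel)) (PiM {..<n} (\<lambda>_. borel))"
    by (rule measurable_restrict) (auto simp: J_def intro: measurable_component_singleton)
  have pad: "?pad \<in> measurable (PiM {..<n} (\<lambda>_. borel)) seq_borel"
    by (rule measurable_zero_padded) auto
  have "distr M (PiM J (\<lambda>_. borel)) ?restr = PiM J (\<lambda>j. distr M borel (\<nu> j))"
  proof -
    have "f 0 \<in> J" using \<open>n \<ge> 1\<close> by (simp add: J_def)
    then have "J \<noteq> {}" by blast
    moreover have "indep_vars (\<lambda>_. borel) \<nu> J" using indep by (rule indep_vars_subset) simp
    ultimately show ?thesis
      using indep_vars_iff_distr_eq_PiM[where M'="\<lambda>_. borel" and X=\<nu>] meas by blast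
  qed
  also have "\<dots> = PiM J (\<lambda>_. ?U)" by (intro PiM_cong) (simp_all add: unif)
  finally have iid: "distr M (PiM J (\<lambda>_. borel)) ?restr = PiM J (\<lambda>_. ?U)" .
  have reindex_iid: "distr (PiM J (\<lambda>_. ?U)) (PiM {..<n} (\<lambda>_. ?U)) ?reindex = PiM {..<n} (\<lambda>_. ?U)"
    using distr_PiM_reindex[of J "\<lambda>_. ?U" f "{..<n}"] prob_space_uniform_measure[of lborel "{0..1::real}"]
    by (simp add: J_def f_def inj_on_def)
  have "block n \<nu> t = ?pad \<circ> (?reindex \<circ> ?restr)"
    by (auto simp: fun_eq_iff block_def f_def J_def)
  then have "block_law M n \<nu> t
      = distr (distr (distr M (PiM J (\<lambda>_. borel)) ?restr) (PiM {..<n} (\<lambda>_. borel)) ?reindex) seq_borel ?pad"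
    unfolding block_law_def
    by (simp only: distr_distr[OF pad measurable_comp[OF restr reindex]] distr_distr[OF reindex restr])
  also have "\<dots> = distr (distr (PiM J (\<lambda>_. ?U)) (PiM {..<n} (\<lambda>_. ?U)) ?reindex) seq_borel ?pad"
    unfolding iid by (intro arg_cong[where f="\<lambda>N. distr N seq_borel ?pad"] distr_cong) (simp_all add: sets_U)
  also have "\<dots> = unif_block_law n"
    unfolding reindex_iid unif_block_law_def ..
  finally show ?thesis .
qed

lemma eventually_W1_block_law_le:
  assumes P: "prob_space M" and y: "\<And>t. y t \<in> borel_measurable M"
    and ys: "\<And>m t. ys m t \<in> borel_measurable M"
    and close: "\<And>d. d > 0 \<Longrightarrow> eventually (\<lambda>m. AE \<omega> in M. \<forall>s. \<bar>ys m s \<omega> - y s \<omega>\<bar> \<le> d) sequentially"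
    and "e > 0"
  shows "eventually (\<lambda>m. W1 n (block_law M n y t) (block_law M n (ys m) t) \<le> ereal e) sequentially"
proof -
  define d where "d = e / (sqrt n + 1)"
  have "d > 0" "sqrt n * d \<le> e"
    using \<open>e > 0\<close> by (auto simp: d_def field_simps add_pos_nonneg)
  from close[OF \<open>d > 0\<close>] show ?thesis
  proof (rule eventually_mono)
    fix m assume "AE \<omega> in M. \<forall>s. \<bar>ys m s \<omega> - y s \<omega>\<bar> \<le> d"
    then have "AE \<omega> in M. dist_n n (block n y t \<omega>) (block n (ys m) t \<omega>) \<le> e"
    proof (rule eventually_mono)
      fix \<omega> assume "\<forall>s. \<bar>ys m s \<omega> - y s \<omega>\<bar> \<le> d"
      then have "dist_n n (block n y t \<omega>) (block n (ys m) t \<omega>) \<le> sqrt n * \<bar>d\<bar>"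
        by (intro dist_n_le) (simp add: block_def abs_minus_commute)
      with \<open>d > 0\<close> \<open>sqrt n * d \<le> e\<close> show "dist_n n (block n y t \<omega>) (block n (ys m) t \<omega>) \<le> e"
        by simp
    qed
    then show "W1 n (block_law M n y t) (block_law M n (ys m) t) \<le> ereal e"
      unfolding block_law_def by (rule W1_distr_le[OF P measurable_block[OF y] measurable_block[OF ys]])
  qed
qed

text \<open>Uniform continuity of H on the compact cube [-1, 2]^\<nat> (product topology), a neighbourhood
of the unit cube in the coordinatewise supremum distance.\<close>
lemma uniform_limit_near_unit_cube:
  fixes H :: "(nat \<Rightarrow> real) \<Rightarrow> real"
  assumes lim: "uniform_limit UNIV Hs H sequentially" and cont: "continuous_on UNIV H" and "e > 0"
  obtains \<delta> where "\<delta> > 0"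
    "eventually (\<lambda>m. \<forall>p q. (\<forall>k. p k \<in> {0..1}) \<longrightarrow> (\<forall>k. \<bar>q k - p k\<bar> \<le> \<delta>) \<longrightarrow> \<bar>Hs m q - H p\<bar> \<le> e)
       sequentially"
proof -
  define K where "K = PiE UNIV (\<lambda>_::nat. {-1..2::real})"
  have "compactin (product_topology (\<lambda>_. euclidean) UNIV) K"
    by (simp add: K_def compactin_PiE)
  then have "compact K" by (simp add: euclidean_product_topology)
  with cont have "uniformly_continuous_on K H"
    by (intro compact_uniformly_continuous) (auto intro: continuous_on_subset)
  then obtain d where d: "d > 0" "\<And>p q. p \<in> K \<Longrightarrow> q \<in> K \<Longrightarrow> dist q p < d \<Longrightarrow> dist (H q) (H p) < e/2"
    using \<open>e > 0\<close> unfolding uniformly_continuous_on_def by (metis half_gt_zero)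
  define \<delta> where "\<delta> = min 1 (d/4)"
  have "\<delta> > 0" using d(1) by (simp add: \<delta>_def)
  moreover have "eventually (\<lambda>m. \<forall>q. dist (Hs m q) (H q) < e/2) sequentially"
    using lim[unfolded uniform_limit_iff, rule_format, of "e/2"] \<open>e > 0\<close> by simp
  then have "eventually (\<lambda>m. \<forall>p q. (\<forall>k. p k \<in> {0..1}) \<longrightarrow> (\<forall>k. \<bar>q k - p k\<bar> \<le> \<delta>)
      \<longrightarrow> \<bar>Hs m q - H p\<bar> \<le> e) sequentially"
  proof (elim eventually_mono, intro allI impI)
    fix m and p q :: "nat \<Rightarrow> real" assume Hs: "\<forall>q. dist (Hs m q) (H q) < e/2"
      and p: "\<forall>k. p k \<in> {0..1}" and q: "\<forall>k. \<bar>q k - p k\<bar> \<le> \<delta>"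
    have "\<delta> \<le> 1" "\<delta> \<le> d/4" by (simp_all add: \<delta>_def)
    then have "p \<in> K" "q \<in> K"
      using p q by (auto simp: K_def abs_le_iff) (smt (verit) atLeastAtMost_iff)+
    moreover have "dist q p \<le> 2 * \<delta>"
      using q \<open>\<delta> > 0\<close> by (intro dist_fun_le_coordinatewise) auto
    ultimately have "\<bar>H q - H p\<bar> < e/2"
      using d(2)[of p q] \<open>\<delta> \<le> d/4\<close> d(1) by (simp add: dist_real_def)
    with Hs[rule_format, of q] abs_triangle_ineq[of "Hs m q - H q" "H q - H p"]
    show "\<bar>Hs m q - H p\<bar> \<le> e"
      by (simp add: dist_real_def)
  qed
  ultimately show ?thesis using that by blast
qed

lemma prob_space_unif_block_law:
  "prob_space (unif_block_law n)" "sets (unif_block_law n) = sets seq_borel"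
proof -
  let ?U = "uniform_measure lborel {0..1::real}"
  have "prob_space ?U" by (rule prob_space_uniform_measure) auto
  then have "prob_space (PiM {..<n} (\<lambda>_. ?U))" by (intro prob_space_PiM)
  have "sets (PiM {..<n} (\<lambda>_. ?U)) = sets (PiM {..<n} (\<lambda>_. borel))"
    by (rule sets_PiM_cong) auto
  moreover have "(\<lambda>v i. if i < n then v i else 0) \<in> measurable (PiM {..<n} (\<lambda>_. borel)) seq_borel"
    by (rule measurable_zero_padded) auto
  ultimately have "(\<lambda>v i. if i < n then v i else 0) \<in> measurable (PiM {..<n} (\<lambda>_. ?U)) seq_borel"
    using measurable_cong_sets by blast
  with \<open>prob_space (PiM {..<n} (\<lambda>_. ?U))\<close>
  show "prob_space (unif_block_law n)" "sets (unif_block_law n) = sets seq_borel"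
    unfolding unif_block_law_def by (simp_all add: prob_space.prob_space_distr)
qed

lemma ereal_le_of_add_scaled_le:
  assumes "0 \<le> a" "0 \<le> b" "a + ereal lam * b \<le> ereal c" "lam > 0"
  shows "a \<le> ereal c" "b \<le> ereal (c / lam)"
proof -
  have "0 \<le> ereal lam * b" using assms(2,4) by simp
  with assms(3) show "a \<le> ereal c" by (metis add_increasing2 order_refl order_trans)
  have lam_b: "ereal lam * b \<le> ereal c"
    using assms(1,3) by (metis add_increasing order_refl order_trans)
  show "b \<le> ereal (c / lam)"
  proof (cases b)
    case (real r)
    with lam_b \<open>lam > 0\<close> show ?thesis by (simp add: pos_le_divide_eq mult.commute)
  qed (use lam_b assms(2,4) in auto)
qed

lemma weak_conv_n_of_wiae_loss:
  assumes prob: "prob_space M" and x_rv: "\<And>t. x t \<in> borel_measurable M"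
    and Gnet_meas: "\<And>m \<theta>. Gnet m \<theta> \<in> borel_measurable seq_borel"
    and Hnet_meas: "\<And>m \<eta>. Hnet m \<eta> \<in> borel_measurable seq_borel"
    and lam_pos: "lam > 0"
    and loss: "\<And>e. e > 0 \<Longrightarrow> eventually (\<lambda>m. wiae_loss M Gnet Hnet lam x n m (\<theta> m) (\<eta> m) \<le> ereal e) sequentially"
  shows "weak_conv_n n (\<lambda>m. block_law M n (apply_causal (Gnet m (\<theta> m)) x) 0) (unif_block_law n)"
    and "weak_conv_n n (\<lambda>m. block_law M n (apply_causal (Hnet m (\<eta> m)) (apply_causal (Gnet m (\<theta> m)) x)) 0)
      (block_law M n x 0)"
proof -
  let ?\<nu> = "\<lambda>m. apply_causal (Gnet m (\<theta> m)) x"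
  let ?xh = "\<lambda>m. apply_causal (Hnet m (\<eta> m)) (?\<nu> m)"
  have \<nu>_meas: "?\<nu> m t \<in> borel_measurable M" for m t
    by (rule measurable_apply_causal[OF Gnet_meas x_rv])
  have xh_meas: "?xh m t \<in> borel_measurable M" for m t
    by (rule measurable_apply_causal[OF Hnet_meas \<nu>_meas])
  note laws = prob_space_unif_block_law prob_space_block_law[OF prob x_rv]
    prob_space_block_law[OF prob \<nu>_meas] prob_space_block_law[OF prob xh_meas]
  let ?A = "\<lambda>m. W1 n (unif_block_law n) (block_law M n (?\<nu> m) 0)"
  let ?B = "\<lambda>m. W1 n (block_law M n x 0) (block_law M n (?xh m) 0)"
  have A_nonneg: "0 \<le> ?A m" and B_nonneg: "0 \<le> ?B m" for m
    by (rule W1_nonneg; simp add: laws)+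
  have "eventually (\<lambda>m. ?A m \<le> ereal e) sequentially" if "e > 0" for e
    using loss[OF that] unfolding wiae_loss_def
    by (rule eventually_mono) (rule ereal_le_of_add_scaled_le(1)[OF A_nonneg B_nonneg _ lam_pos])
  then show "weak_conv_n n (\<lambda>m. block_law M n (?\<nu> m) 0) (unif_block_law n)"
    by (rule weak_conv_n_of_W1[rotated 4]) (simp_all add: laws)
  have "eventually (\<lambda>m. ?B m \<le> ereal e) sequentially" if "e > 0" for e
  proof -
    have "e * lam > 0" using \<open>e > 0\<close> lam_pos by simp
    from loss[OF this] have "eventually (\<lambda>m. ?B m \<le> ereal (e * lam / lam)) sequentially"
      unfolding wiae_loss_def
      by (rule eventually_mono) (rule ereal_le_of_add_scaled_le(2)[OF A_nonneg B_nonneg _ lam_pos])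
    with lam_pos show ?thesis by simp
  qed
  then show "weak_conv_n n (\<lambda>m. block_law M n (?xh m) 0) (block_law M n x 0)"
    by (rule weak_conv_n_of_W1[rotated 4]) (simp_all add: laws)
qed

lemma eventually_wiae_loss_le:
  fixes x :: "int \<Rightarrow> 'a \<Rightarrow> real" and G H :: "(nat \<Rightarrow> real) \<Rightarrow> real"
  assumes prob: "prob_space M" and x_rv: "\<And>t. x t \<in> borel_measurable M" and lam_pos: "lam > 0"
    and Gnet_meas: "\<And>m \<theta>. Gnet m \<theta> \<in> borel_measurable seq_borel"
    and Hnet_meas: "\<And>m \<eta>. Hnet m \<eta> \<in> borel_measurable seq_borel"
    and G_meas: "G \<in> borel_measurable seq_borel" and H_meas: "H \<in> borel_measurable seq_borel"
    and nu_indep: "prob_space.indep_vars M (\<lambda>_. borel) (apply_causal G x) UNIV"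
    and nu_unif: "\<And>t. distr M borel (apply_causal G x t) = uniform_measure lborel {0..1::real}"
    and xhat_eq: "fidi_eq M (apply_causal H (apply_causal G x)) x"
    and H_cont: "continuous_on UNIV H"
    and G_approx: "uniform_limit UNIV (\<lambda>m. Gnet m (\<theta> m)) G sequentially"
    and H_approx: "uniform_limit UNIV (\<lambda>m. Hnet m (\<eta> m)) H sequentially"
    and "n \<ge> 1" and "e > 0"
  shows "eventually (\<lambda>m. wiae_loss M Gnet Hnet lam x n m (\<theta> m) (\<eta> m) \<le> ereal e) sequentially"
proof -
  define \<nu> where "\<nu> = apply_causal G x"
  define \<nu>s where "\<nu>s m = apply_causal (Gnet m (\<theta> m)) x" for m
  define xh where "xh = apply_causal H \<nu>"
  define xhs where "xhs m = apply_causal (Hnet m (\<eta> m)) (\<nu>s m)" for m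
  have \<nu>_meas: "\<nu> t \<in> borel_measurable M" and \<nu>s_meas: "\<nu>s m t \<in> borel_measurable M" for m t
    unfolding \<nu>_def \<nu>s_def by (rule measurable_apply_causal[OF _ x_rv] G_meas Gnet_meas)+
  have xh_meas: "xh t \<in> borel_measurable M" and xhs_meas: "xhs m t \<in> borel_measurable M" for m t
    unfolding xh_def xhs_def by (rule measurable_apply_causal[OF _ \<nu>_meas] measurable_apply_causal[OF _ \<nu>s_meas]
      H_meas Hnet_meas)+
  have \<nu>s_close: "eventually (\<lambda>m. \<forall>s \<omega>. \<bar>\<nu>s m s \<omega> - \<nu> s \<omega>\<bar> \<le> d) sequentially" if "d > 0" for d
    using G_approx[unfolded uniform_limit_iff, rule_format, OF that]
    by (rule eventually_mono) (simp add: \<nu>s_def \<nu>_def apply_causal_def dist_real_def less_imp_le)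
  have \<nu>_unit: "AE \<omega> in M. \<forall>s. \<nu> s \<omega> \<in> {0..1}"
  proof -
    have "AE \<omega> in M. \<nu> s \<omega> \<in> {0..1}" for s
    proof -
      have "AE z in uniform_measure lborel {0..1::real}. z \<in> {0..1}"
        by (rule AE_uniform_measureI) auto
      then have "AE z in distr M borel (\<nu> s). z \<in> {0..1}"
        by (simp only: \<nu>_def nu_unif)
      then show ?thesis
        by (subst (asm) AE_distr_iff) (use \<nu>_meas in auto)
    qed
    then show ?thesis by (simp add: AE_all_countable)
  qed
  have xhs_close: "eventually (\<lambda>m. AE \<omega> in M. \<forall>s. \<bar>xhs m s \<omega> - xh s \<omega>\<bar> \<le> d) sequentially"
    if d: "d > 0" for d
  proof -
    obtain \<delta> where "\<delta> > 0" and H_close: "eventually (\<lambda>m. \<forall>p q. (\<forall>k. p k \<in> {0..1})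
        \<longrightarrow> (\<forall>k. \<bar>q k - p k\<bar> \<le> \<delta>) \<longrightarrow> \<bar>Hnet m (\<eta> m) q - H p\<bar> \<le> d) sequentially"
      using uniform_limit_near_unit_cube[OF H_approx H_cont d] by blast
    from H_close \<nu>s_close[OF \<open>\<delta> > 0\<close>] show ?thesis
    proof eventually_elim
      case (elim m)
      show ?case
        using \<nu>_unit
      proof (rule eventually_mono, intro allI)
        fix \<omega> s assume "\<forall>s. \<nu> s \<omega> \<in> {0..1}"
        with elim have "\<bar>Hnet m (\<eta> m) (past (\<nu>s m) s \<omega>) - H (past \<nu> s \<omega>)\<bar> \<le> d"
          by (simp add: past_def)
        then show "\<bar>xhs m s \<omega> - xh s \<omega>\<bar> \<le> d"
          by (simp add: xhs_def xh_def apply_causal_def)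
      qed
    qed
  qed
  have law_x: "block_law M n x 0 = block_law M n xh 0"
    using block_law_eq_of_fidi_eq[OF xhat_eq _ x_rv] xh_meas by (simp add: xh_def \<nu>_def)
  have law_\<nu>: "unif_block_law n = block_law M n \<nu> 0"
    using block_law_iid_uniform[OF prob \<nu>_meas _ _ \<open>n \<ge> 1\<close>] nu_indep nu_unif by (simp add: \<nu>_def)
  have "eventually (\<lambda>m. W1 n (unif_block_law n) (block_law M n (\<nu>s m) 0) \<le> ereal (e/2)) sequentially"
    unfolding law_\<nu>
  proof (rule eventually_W1_block_law_le[OF prob \<nu>_meas \<nu>s_meas])
    show "eventually (\<lambda>m. AE \<omega> in M. \<forall>s. \<bar>\<nu>s m s \<omega> - \<nu> s \<omega>\<bar> \<le> d) sequentially" if "d > 0" for d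
      using \<nu>s_close[OF that] by (rule eventually_mono) simp
  qed (use \<open>e > 0\<close> in simp)
  moreover have "eventually (\<lambda>m. W1 n (block_law M n x 0) (block_law M n (xhs m) 0) \<le> ereal (e / (2 * lam)))
      sequentially"
    unfolding law_x using \<open>e > 0\<close> lam_pos xhs_close
    by (intro eventually_W1_block_law_le[OF prob xh_meas xhs_meas]) auto
  ultimately show ?thesis
  proof eventually_elim
    case (elim m)
    have "ereal lam * W1 n (block_law M n x 0) (block_law M n (xhs m) 0) \<le> ereal lam * ereal (e / (2 * lam))"
      using elim(2) lam_pos by (intro ereal_mult_left_mono) auto
    also have "\<dots> = ereal (e/2)" using lam_pos by simp
    finally have "W1 n (unif_block_law n) (block_law M n (\<nu>s m) 0)
        + ereal lam * W1 n (block_law M n x 0) (block_law M n (xhs m) 0) \<le> ereal (e/2) + ereal (e/2)"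
      using elim(1) by (rule add_mono[rotated])
    then show ?case by (simp add: wiae_loss_def \<nu>s_def xhs_def)
  qed
qed

theorem theorem1:
  fixes M :: "'a measure"
    and x :: "int \<Rightarrow> 'a \<Rightarrow> real"
    and lam :: real
    and G H :: "(nat \<Rightarrow> real) \<Rightarrow> real"
    and Gnet :: "nat \<Rightarrow> 'p \<Rightarrow> (nat \<Rightarrow> real) \<Rightarrow> real"
    and Hnet :: "nat \<Rightarrow> 'q \<Rightarrow> (nat \<Rightarrow> real) \<Rightarrow> real"
    and \<theta>t :: "nat \<Rightarrow> 'p" and \<eta>t :: "nat \<Rightarrow> 'q"
    and \<theta>s :: "nat \<Rightarrow> nat \<Rightarrow> 'p" and \<eta>s :: "nat \<Rightarrow> nat \<Rightarrow> 'q"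
  assumes prob: "prob_space M"
    and x_rv: "\<And>t. x t \<in> borel_measurable M"
    and stat: "stationary M x"
    and lam_pos: "lam > 0"
    \<comment> \<open>finite-dimensional networks: measurable and depending only on the m most recent coordinates\<close>
    and Gnet_meas: "\<And>m \<theta>. Gnet m \<theta> \<in> borel_measurable (PiM UNIV (\<lambda>_. borel))"
    and Hnet_meas: "\<And>m \<eta>. Hnet m \<eta> \<in> borel_measurable (PiM UNIV (\<lambda>_. borel))"
    and Gnet_window: "\<And>m \<theta> a b. (\<forall>i<m. a i = b i) \<Longrightarrow> Gnet m \<theta> a = Gnet m \<theta> b"
    and Hnet_window: "\<And>m \<eta> a b. (\<forall>i<m. a i = b i) \<Longrightarrow> Hnet m \<eta> a = Hnet m \<eta> b"
    \<comment> \<open>(A1) weak innovations representation\<close>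
    and G_meas: "G \<in> borel_measurable (PiM UNIV (\<lambda>_. borel))"
    and H_meas: "H \<in> borel_measurable (PiM UNIV (\<lambda>_. borel))"
    and nu_indep: "prob_space.indep_vars M (\<lambda>_. borel) (apply_causal G x) UNIV"
    and nu_unif: "\<And>t. distr M borel (apply_causal G x t) = uniform_measure lborel {0..1::real}"
    and xhat_eq: "fidi_eq M (apply_causal H (apply_causal G x)) x"
    and H_cont: "continuous_on UNIV H"
    \<comment> \<open>(A2) feasibility\<close>
    and G_approx: "uniform_limit UNIV (\<lambda>m. Gnet m (\<theta>t m)) G sequentially"
    and H_approx: "uniform_limit UNIV (\<lambda>m. Hnet m (\<eta>t m)) H sequentially"
    \<comment> \<open>(A3) training reaches a global minimizer of L^(n)_m for every n, m\<close>
    and opt: "\<And>n m \<theta> \<eta>. wiae_loss M Gnet Hnet lam x n m (\<theta>s n m) (\<eta>s n m)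
                          \<le> wiae_loss M Gnet Hnet lam x n m \<theta> \<eta>"
  shows "\<forall>n t. n \<ge> 1 \<longrightarrow>
      weak_conv_n n (\<lambda>m. block_law M n (apply_causal (Gnet m (\<theta>s n m)) x) t)
                    (block_law M n (apply_causal G x) t)
    \<and> weak_conv_n n (\<lambda>m. block_law M n (apply_causal (Hnet m (\<eta>s n m))
                                          (apply_causal (Gnet m (\<theta>s n m)) x)) t)
                    (block_law M n x t)"
proof (intro allI impI)
  fix n :: nat and t :: int
  assume "n \<ge> 1"
  let ?\<nu> = "\<lambda>m. apply_causal (Gnet m (\<theta>s n m)) x"
  let ?xh = "\<lambda>m. apply_causal (Hnet m (\<eta>s n m)) (?\<nu> m)"
  have loss: "eventually (\<lambda>m. wiae_loss M Gnet Hnet lam x n m (\<theta>s n m) (\<eta>s n m) \<le> ereal e) sequentially"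
    if "e > 0" for e
    using eventually_wiae_loss_le[where Gnet=Gnet and Hnet=Hnet and \<theta>=\<theta>t and \<eta>=\<eta>t,
        OF prob x_rv lam_pos Gnet_meas Hnet_meas G_meas H_meas nu_indep nu_unif
        xhat_eq H_cont G_approx H_approx \<open>n \<ge> 1\<close> that]
    by (rule eventually_mono) (rule order_trans[OF opt])
  note conv = weak_conv_n_of_wiae_loss[where \<theta>="\<theta>s n" and \<eta>="\<eta>s n" and n=n,
      OF prob x_rv Gnet_meas Hnet_meas lam_pos loss]
  have \<nu>_window: "sliding_window x (?\<nu> m)" for m
    using sliding_window_apply_causal[OF sliding_window_refl Gnet_meas Gnet_window] .
  have xh_window: "sliding_window x (?xh m)" for m
    using sliding_window_apply_causal[OF \<nu>_window Hnet_meas Hnet_window] .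
  have "block_law M n (?\<nu> m) t = block_law M n (?\<nu> m) 0"
    and "block_law M n (?xh m) t = block_law M n (?xh m) 0" for m
    using stationary_sliding_window[OF stat x_rv] \<nu>_window xh_window
    by (auto intro!: block_law_stationary measurable_apply_causal Gnet_meas Hnet_meas x_rv)
  moreover have "block_law M n (apply_causal G x) t = unif_block_law n"
    using block_law_iid_uniform[OF prob measurable_apply_causal[OF G_meas x_rv] nu_indep nu_unif]
      \<open>n \<ge> 1\<close> .
  moreover have "block_law M n x t = block_law M n x 0"
    by (rule block_law_stationary[OF stat x_rv])
  ultimately show "weak_conv_n n (\<lambda>m. block_law M n (?\<nu> m) t) (block_law M n (apply_causal G x) t)
    \<and> weak_conv_n n (\<lambda>m. block_law M n (?xh m) t) (block_law M n x t)"
    using conv by simp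
qed

end
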